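(* Let $c\ge2$, $d\ge c$. Let $\mathbb E\Gamma=[\mathbb E\gamma_1,\dots,\mathbb E\gamma_c]\in\mathbb R^{d\times c}$ and server vectors $\gamma_1,\dots,\gamma_c\in\mathbb R^d$, let $\hat{\mathcal P}$ be an affine subspace of $\mathbb R^d$, $\Pi_{\hat{\mathcal P}}(\Gamma)=[\Pi_{\hat{\mathcal P}}(\gamma_1),\dots,\Pi_{\hat{\mathcal P}}(\gamma_c)]$ and $\Delta\Gamma=\Pi_{\hat{\mathcal P}}(\Gamma)-\mathbb E\Gamma$. Assume the $(c-1)$-th largest singular value of $\mathbb E\Gamma\,(I-\frac1c\mathbf 1\mathbf 1^\top)$ is at least $\sigma_s$, and that $\|\Delta\Gamma\|_2<\sigma_s$ (spectral norm). Let $g_h\in\mathbb R^d$ and $\mathbb Eg_h\in\mathbb R^d$, let $p_h\in\mathbb R^c$ be a probability vector with $\mathbb E\Gamma\,p_h=\mathbb Eg_h$, and let $\hat p_h\in\mathbb R^c$ satisfy $\Pi_{\hat{\mathcal P}}(\Gamma)\hat p_h=\Pi_{\hat{\mathcal P}}(g_h)$ and $\mathbf 1^\top\hat p_h=1$. Writing $\Delta g_h=\Pi_{\hat{\mathcal P}}(g_h)-\mathbb Eg_h$, $$\|\hat p_h-p_h\|_2\le\frac{\|\Delta g_h\|_2+\sqrt2\,\|\Delta\Gamma\|_2}{\sigma_s-\|\Delta\Gamma\|_2}.$$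
   Context: For an affine subspace $\mathcal P=\{U\lambda+m\}$ ($U$ with orthonormal columns), $\Pi_{\mathcal P}(w)=UU^\top(w-m)+m$ is its orthogonal projection. $\mathbf 1\in\mathbb R^c$ is the all-ones vector. *)

theory Defs
  imports "HOL-Analysis.Analysis" "HOL-Computational_Algebra.Polynomial"
begin

definition charpoly :: "real^'n^'n \<Rightarrow> real poly" where
  "charpoly M = det (\<chi> i j. (if i = j then [:0, 1:] else 0) - [:M $ i $ j:])"

definition eigenvalues_desc :: "real^'n^'n \<Rightarrow> real list" where
  "eigenvalues_desc M = rev (sorted_list_of_multiset (proots (charpoly M)))"

text \<open>k-th largest singular value (k counted from 1) of a matrix A:
  square root of the k-th largest eigenvalue of A^T A.\<close>
definition singular_value :: "real^'c^'d \<Rightarrow> nat \<Rightarrow> real" where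
  "singular_value A k = sqrt (eigenvalues_desc (transpose A ** A) ! (k - 1))"

definition spec_norm :: "real^'c^'d \<Rightarrow> real" where
  "spec_norm A = onorm (\<lambda>x. A *v x)"

text \<open>Orthogonal projection onto the affine subspace {U \<lambda> + m}, U with orthonormal columns.\<close>
definition aff_proj :: "real^'k^'d \<Rightarrow> real^'d \<Rightarrow> real^'d \<Rightarrow> real^'d" where
  "aff_proj U m w = U *v (transpose U *v (w - m)) + m"

definition aff_proj_mat :: "real^'k^'d \<Rightarrow> real^'d \<Rightarrow> real^'c^'d \<Rightarrow> real^'c^'d" where
  "aff_proj_mat U m G = (\<chi> i j. aff_proj U m (column j G) $ i)"

definition centering :: "real^'c^'c" where
  "centering = mat 1 - (\<chi> i j. 1 / real CARD('c))"

end

theory Submission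
  imports Defs
begin

text \<open>Put \<open>q = p_hat - p_h\<close>, so that \<open>\<one>\<^sup>T q = 0\<close>, and \<open>T = EG (I - \<one>\<one>\<^sup>T/c)\<close>, so that \<open>T \<one> = 0\<close>
  and \<open>T q = EG q\<close>. The self-adjoint map \<open>T\<^sup>T T\<close> has an orthonormal eigenbasis containing
  \<open>\<one>/\<surd>c\<close> (spectral theorem, by maximising the Rayleigh quotient on invariant subspaces). Its
  eigenvalues are \<open>\<ge> 0\<close> and \<open>\<one>\<close> carries the eigenvalue \<open>0\<close>, so the other basis vectors carry
  eigenvalues at least the \<open>(c-1)\<close>-th largest one, which is \<open>\<ge> \<sigma>\<^sub>s\<^sup>2\<close>; expanding \<open>q \<perp> \<one>\<close> in
  the basis gives \<open>\<sigma>\<^sub>s \<parallel>q\<parallel> \<le> \<parallel>EG q\<parallel>\<close>. Finally \<open>EG q = \<Delta>g\<^sub>h - \<Delta>\<Gamma> p_hat\<close> and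
  \<open>\<parallel>p_hat\<parallel> \<le> \<parallel>p_h\<parallel> + \<parallel>q\<parallel> \<le> 1 + \<parallel>q\<parallel>\<close>, whence \<open>(\<sigma>\<^sub>s - \<parallel>\<Delta>\<Gamma>\<parallel>\<^sub>2) \<parallel>q\<parallel> \<le> \<parallel>\<Delta>g\<^sub>h\<parallel> + \<parallel>\<Delta>\<Gamma>\<parallel>\<^sub>2\<close>.
  So the factor \<open>\<surd>2\<close> is slack.\<close>

definition orthonormal_eigenbasis :: "('a::real_inner \<Rightarrow> 'a) \<Rightarrow> 'a set \<Rightarrow> 'a set \<Rightarrow> bool" where
  "orthonormal_eigenbasis f S B \<longleftrightarrow> B \<subseteq> S \<and> pairwise orthogonal B \<and>
     (\<forall>b\<in>B. norm b = 1 \<and> f b = (b \<bullet> f b) *\<^sub>R b) \<and> span B = S"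

lemma linear_coeff_zero_if_quadratic_nonpos:
  fixes a b :: real
  assumes "\<And>t. 2*t*a + t^2*b \<le> 0"
  shows "a = 0"
proof (rule ccontr)
  assume a: "a \<noteq> 0"
  define D where "D = 1 + \<bar>b\<bar>"
  have D: "D > 0" "2*D + b > 0" unfolding D_def by auto
  define t where "t = a / D"
  have "2*t*a + t^2*b = a^2*(2*D+b)/D^2"
    using D by (simp add: t_def power2_eq_square field_simps)
  moreover have "a^2*(2*D+b)/D^2 > 0" using a D by (intro divide_pos_pos mult_pos_pos) auto
  moreover have "2*t*a + t^2*b \<le> 0" by (rule assms)
  ultimately show False by linarith
qed

lemma rayleigh_quotient_attains_max:
  fixes f :: "'a::euclidean_space \<Rightarrow> 'a"
  assumes lin: "linear f" and S: "subspace S" "S \<noteq> {0}"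
  obtains v where "v \<in> S" "norm v = 1" "\<And>x. x \<in> S \<Longrightarrow> x \<bullet> f x \<le> (v \<bullet> f v) * (x \<bullet> x)"
proof -
  define K where "K = S \<inter> sphere 0 1"
  have normalize_in_K: "x /\<^sub>R norm x \<in> K" if "x \<in> S" "x \<noteq> 0" for x
    unfolding K_def using that S(1) subspace_scale by auto
  have "compact K" unfolding K_def
    using closed_subspace[OF S(1)] compact_sphere closed_Int_compact by blast
  moreover have "K \<noteq> {}" using S subspace_0 normalize_in_K by blast
  moreover have "continuous_on K (\<lambda>x. x \<bullet> f x)"
    by (intro continuous_intros linear_continuous_on linear_conv_bounded_linear[THEN iffD1] lin)
  ultimately obtain v where vK: "v \<in> K" and vmax: "\<And>y. y \<in> K \<Longrightarrow> y \<bullet> f y \<le> v \<bullet> f v"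
    using continuous_attains_sup by metis
  have "x \<bullet> f x \<le> (v \<bullet> f v) * (x \<bullet> x)" if "x \<in> S" for x
  proof (cases "x = 0")
    case True then show ?thesis using linear_0[OF lin] by simp
  next
    case False
    have "(x /\<^sub>R norm x) \<bullet> f (x /\<^sub>R norm x) \<le> v \<bullet> f v"
      using vmax normalize_in_K[OF that False] by blast
    hence "(x \<bullet> f x) / (x \<bullet> x) \<le> v \<bullet> f v"
      by (simp add: linear_scale[OF lin] power2_eq_square divide_simps flip: power2_norm_eq_inner)
    moreover have "x \<bullet> x > 0" using False by simp
    ultimately show ?thesis by (simp add: divide_le_eq mult.commute)
  qed
  then show thesis using that vK unfolding K_def by auto
qed

text \<open>First variation: along \<open>v + t w\<close> the defect of the Rayleigh inequality is a quadratic in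
  \<open>t\<close> with a maximum at \<open>t = 0\<close>, so its linear coefficient \<open>w \<bullet> (f v - \<lambda> v)\<close> vanishes.\<close>
lemma rayleigh_maximizer_is_eigenvector:
  fixes f :: "'a::real_inner \<Rightarrow> 'a"
  assumes lin: "linear f" and sa: "\<And>x y. f x \<bullet> y = x \<bullet> f y"
    and S: "subspace S" "f ` S \<subseteq> S" and v: "v \<in> S" "norm v = 1"
    and max: "\<And>x. x \<in> S \<Longrightarrow> x \<bullet> f x \<le> (v \<bullet> f v) * (x \<bullet> x)"
  shows "f v = (v \<bullet> f v) *\<^sub>R v"
proof -
  define l where "l = v \<bullet> f v"
  have vv: "v \<bullet> v = 1" using v(2) by (simp add: norm_eq_1)
  have orth: "w \<bullet> (f v - l *\<^sub>R v) = 0" if wS: "w \<in> S" for w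
  proof -
    have "2*t*(w \<bullet> (f v - l *\<^sub>R v)) + t^2*(w \<bullet> f w - l * (w \<bullet> w)) \<le> 0" for t
    proof -
      have "v + t *\<^sub>R w \<in> S" using S(1) v(1) wS subspace_add subspace_scale by blast
      from max[OF this]
      have "(v + t *\<^sub>R w) \<bullet> f (v + t *\<^sub>R w) \<le> l * ((v + t *\<^sub>R w) \<bullet> (v + t *\<^sub>R w))"
        by (simp add: l_def)
      moreover have "v \<bullet> f w = w \<bullet> f v" using sa[of v w] by (simp add: inner_commute)
      ultimately show ?thesis
        by (simp add: linear_add[OF lin] linear_scale[OF lin] inner_add inner_commute
            power2_eq_square algebra_simps vv l_def)
    qed
    then show ?thesis by (rule linear_coeff_zero_if_quadratic_nonpos)
  qed
  have "f v - l *\<^sub>R v \<in> S" using S v(1) subspace_diff subspace_scale by blast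
  from orth[OF this] show ?thesis by (simp add: l_def)
qed

lemma eigenvector_orthogonal_complement_invariant:
  fixes f :: "'a::real_inner \<Rightarrow> 'a"
  assumes sa: "\<And>x y. f x \<bullet> y = x \<bullet> f y" and fv: "f v = \<mu> *\<^sub>R v" and inv: "f ` S \<subseteq> S"
  shows "f ` (S \<inter> {x. v \<bullet> x = 0}) \<subseteq> S \<inter> {x. v \<bullet> x = 0}"
proof -
  have "f x \<in> S \<inter> {x. v \<bullet> x = 0}" if "x \<in> S" "v \<bullet> x = 0" for x
  proof -
    have "v \<bullet> f x = \<mu> * (v \<bullet> x)" using sa[of v x] by (simp add: fv)
    then show ?thesis using that inv by auto
  qed
  then show ?thesis by blast
qed

lemma span_insert_orthogonal_complement:
  fixes v :: "'a::real_inner"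
  assumes S: "subspace S" and v: "v \<in> S" "v \<bullet> v = 1"
    and B: "span B = S \<inter> {x. v \<bullet> x = 0}"
  shows "span (insert v B) = S"
proof
  have "B \<subseteq> S" using B span_superset by blast
  then show "span (insert v B) \<subseteq> S" using S v(1) span_minimal by blast
  show "S \<subseteq> span (insert v B)"
  proof
    fix x assume xS: "x \<in> S"
    have "x - (v \<bullet> x) *\<^sub>R v \<in> span B"
      using xS v S by (simp add: B subspace_diff subspace_scale inner_diff_right)
    then have "x - (v \<bullet> x) *\<^sub>R v \<in> span (insert v B)"
      using span_mono[of B "insert v B"] by blast
    moreover have "(v \<bullet> x) *\<^sub>R v \<in> span (insert v B)" by (simp add: span_base span_scale)
    ultimately have "(x - (v \<bullet> x) *\<^sub>R v) + (v \<bullet> x) *\<^sub>R v \<in> span (insert v B)"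
      by (rule span_add)
    then show "x \<in> span (insert v B)" by simp
  qed
qed

lemma orthonormal_eigenbasis_insert:
  fixes f :: "'a::real_inner \<Rightarrow> 'a"
  assumes S: "subspace S" and v: "v \<in> S" "norm v = 1" "f v = (v \<bullet> f v) *\<^sub>R v"
    and B: "orthonormal_eigenbasis f (S \<inter> {x. v \<bullet> x = 0}) B"
  shows "orthonormal_eigenbasis f S (insert v B)"
proof -
  have vv: "v \<bullet> v = 1" using v(2) by (simp add: norm_eq_1)
  have "pairwise orthogonal (insert v B)"
    using B by (auto simp: orthonormal_eigenbasis_def pairwise_insert orthogonal_def inner_commute)
  moreover have "span (insert v B) = S"
    using span_insert_orthogonal_complement[OF S v(1) vv] B by (simp add: orthonormal_eigenbasis_def)
  ultimately show ?thesis using B v by (auto simp: orthonormal_eigenbasis_def)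
qed

theorem self_adjoint_orthonormal_eigenbasis:
  fixes f :: "'a::euclidean_space \<Rightarrow> 'a"
  assumes lin: "linear f" and sa: "\<And>x y. f x \<bullet> y = x \<bullet> f y"
    and "subspace S" "f ` S \<subseteq> S"
  shows "\<exists>B. orthonormal_eigenbasis f S B"
  using assms(3,4)
proof (induction "dim S" arbitrary: S rule: less_induct)
  case (less S)
  show ?case
  proof (cases "S = {0}")
    case True
    then show ?thesis by (intro exI[of _ "{}"]) (auto simp: orthonormal_eigenbasis_def)
  next
    case False
    obtain v where v: "v \<in> S" "norm v = 1" "\<And>x. x \<in> S \<Longrightarrow> x \<bullet> f x \<le> (v \<bullet> f v) * (x \<bullet> x)"
      using rayleigh_quotient_attains_max[OF lin less.prems(1) False] by blast
    have fv: "f v = (v \<bullet> f v) *\<^sub>R v"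
      using rayleigh_maximizer_is_eigenvector[OF lin sa less.prems v] .
    define S' where "S' = S \<inter> {x. v \<bullet> x = 0}"
    have sub': "subspace S'" unfolding S'_def
      by (rule subspace_inter[OF less.prems(1) subspace_hyperplane])
    have inv': "f ` S' \<subseteq> S'"
      unfolding S'_def by (rule eigenvector_orthogonal_complement_invariant[OF sa fv less.prems(2)])
    have "v \<notin> S'" using v(2) by (simp add: S'_def norm_eq_1)
    then have "S' \<subset> S" using v(1) unfolding S'_def by blast
    then have "dim S' < dim S"
      using dim_psubset sub' less.prems(1) by (metis span_eq_iff)
    then obtain B' where "orthonormal_eigenbasis f S' B'" using less.hyps sub' inv' by blast
    then show ?thesis
      using orthonormal_eigenbasis_insert[of S v f B'] less.prems(1) v(1,2) fv
      by (auto simp: S'_def)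
  qed
qed

lemma self_adjoint_orthonormal_eigenbasis_containing:
  fixes f :: "'a::euclidean_space \<Rightarrow> 'a"
  assumes lin: "linear f" and sa: "\<And>x y. f x \<bullet> y = x \<bullet> f y"
    and u: "norm u = 1" "f u = \<mu> *\<^sub>R u"
  obtains B where "u \<in> B" "orthonormal_eigenbasis f UNIV B"
proof -
  have inv: "f ` {x. u \<bullet> x = 0} \<subseteq> {x. u \<bullet> x = 0}"
    using eigenvector_orthogonal_complement_invariant[OF sa u(2), of UNIV] by simp
  obtain B' where "orthonormal_eigenbasis f {x. u \<bullet> x = 0} B'"
    using self_adjoint_orthonormal_eigenbasis[OF lin sa subspace_hyperplane inv] by blast
  moreover have "f u = (u \<bullet> f u) *\<^sub>R u" using u by (simp add: norm_eq_1)
  ultimately have "orthonormal_eigenbasis f UNIV (insert u B')"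
    using orthonormal_eigenbasis_insert[of UNIV u f B'] u(1) by simp
  then show thesis using that by blast
qed

lemma orthonormal_expansion:
  fixes q :: "'a::euclidean_space"
  assumes B: "pairwise orthogonal B" "\<And>b. b \<in> B \<Longrightarrow> norm b = 1" and q: "q \<in> span B"
  shows "q = (\<Sum>b\<in>B. (b \<bullet> q) *\<^sub>R b)"
proof -
  define r where "r = q - (\<Sum>b\<in>B. (b \<bullet> q) *\<^sub>R b)"
  have "r \<in> span B" unfolding r_def
    by (intro span_diff[OF q] span_sum span_scale span_base)
  from Gram_Schmidt_step[OF B(1) this, of q] have "orthogonal r r"
    using B(2) by (simp add: r_def norm_eq_1 cong: sum.cong)
  then show ?thesis by (simp add: r_def orthogonal_def)
qed

lemma rayleigh_lower_bound:
  fixes f :: "'a::euclidean_space \<Rightarrow> 'a"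
  assumes lin: "linear f" and B: "orthonormal_eigenbasis f S B" and q: "q \<in> S"
    and l: "\<And>b. b \<in> B \<Longrightarrow> b \<bullet> q \<noteq> 0 \<Longrightarrow> l \<le> b \<bullet> f b"
  shows "l * (q \<bullet> q) \<le> q \<bullet> f q"
proof -
  have eig: "\<And>b. b \<in> B \<Longrightarrow> f b = (b \<bullet> f b) *\<^sub>R b"
    using B by (auto simp: orthonormal_eigenbasis_def)
  have qexp: "q = (\<Sum>b\<in>B. (b \<bullet> q) *\<^sub>R b)"
    using B q by (intro orthonormal_expansion) (auto simp: orthonormal_eigenbasis_def)
  have "q \<bullet> q = (\<Sum>b\<in>B. (b \<bullet> q)^2)"
    by (subst (2) qexp) (simp add: inner_sum_right power2_eq_square inner_commute)
  moreover have "q \<bullet> f q = (\<Sum>b\<in>B. (b \<bullet> q)^2 * (b \<bullet> f b))"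
  proof -
    have "f q = f (\<Sum>b\<in>B. (b \<bullet> q) *\<^sub>R b)" using qexp by (rule arg_cong)
    also have "\<dots> = (\<Sum>b\<in>B. (b \<bullet> q) *\<^sub>R f b)"
      by (simp add: linear_sum[OF lin] linear_scale[OF lin])
    finally have "q \<bullet> f q = (\<Sum>b\<in>B. (b \<bullet> q) * (q \<bullet> f b))" by (simp add: inner_sum_right)
    also have "\<dots> = (\<Sum>b\<in>B. (b \<bullet> q)^2 * (b \<bullet> f b))"
    proof (rule sum.cong)
      fix b assume "b \<in> B"
      then have "q \<bullet> f b = (b \<bullet> f b) * (b \<bullet> q)" by (subst eig) (simp_all add: inner_commute)
      then show "(b \<bullet> q) * (q \<bullet> f b) = (b \<bullet> q)^2 * (b \<bullet> f b)" by (simp add: power2_eq_square)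
    qed simp
    finally show ?thesis .
  qed
  moreover have "l * (b \<bullet> q)^2 \<le> (b \<bullet> q)^2 * (b \<bullet> f b)" if "b \<in> B" for b
    using l[OF that] by (cases "b \<bullet> q = 0") (auto simp: mult.commute)
  ultimately show ?thesis by (simp add: sum_distrib_left sum_mono)
qed

lemma orthonormal_eigenbasis_enumeration:
  fixes M :: "real^'n^'n"
  assumes B: "orthonormal_eigenbasis ((*v) M) UNIV B"
  obtains \<phi> where "bij_betw \<phi> (UNIV :: 'n set) B" "\<And>i j. \<phi> i \<bullet> \<phi> j = (if i = j then 1 else 0)"
    "\<And>i. M *v \<phi> i = (\<phi> i \<bullet> (M *v \<phi> i)) *\<^sub>R \<phi> i"
proof -
  have orth: "pairwise orthogonal B" and unit: "\<And>b. b \<in> B \<Longrightarrow> norm b = 1"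
    and eig: "\<And>b. b \<in> B \<Longrightarrow> M *v b = (b \<bullet> (M *v b)) *\<^sub>R b" and span: "span B = UNIV"
    using B by (auto simp: orthonormal_eigenbasis_def)
  have "independent B" using pairwise_orthogonal_independent[OF orth] unit by force
  then have "card B = CARD('n)" using dim_span_eq_card_independent span by fastforce
  moreover have "finite B" using pairwise_orthogonal_imp_finite[OF orth] .
  ultimately obtain \<phi> where \<phi>: "bij_betw \<phi> (UNIV :: 'n set) B"
    using finite_same_card_bij[OF finite_class.finite_UNIV] by metis
  then have \<phi>B: "\<phi> i \<in> B" for i by (auto simp: bij_betw_def)
  have on: "\<phi> i \<bullet> \<phi> j = (if i = j then 1 else 0)" for i j
  proof (cases "i = j")
    case True then show ?thesis using unit[OF \<phi>B] by (simp add: norm_eq_1)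
  next
    case False
    then have "\<phi> i \<noteq> \<phi> j" using \<phi> by (auto simp: bij_betw_def inj_on_def)
    then show ?thesis using orth \<phi>B False by (auto simp: pairwise_def orthogonal_def)
  qed
  have ev: "M *v \<phi> i = (\<phi> i \<bullet> (M *v \<phi> i)) *\<^sub>R \<phi> i" for i using eig \<phi>B by blast
  show thesis by (rule that[OF \<phi> on ev])
qed

lemma poly_det:
  fixes A :: "real poly^'n^'n"
  shows "poly (det A) x = det (\<chi> i j. poly (A$i$j) x)"
  unfolding det_def by (simp add: poly_sum poly_prod)

lemma transpose_mult_dot_column:
  fixes A B :: "real^'n^'m"
  shows "(transpose A ** B) $ i $ j = column i A \<bullet> column j B"
  by (simp add: matrix_matrix_mult_def transpose_def column_def inner_vec_def)

lemma column_matrix_mult: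
  fixes A :: "real^'n^'m" and B :: "real^'k^'n"
  shows "column j (A ** B) = A *v column j B"
  by (simp add: column_def matrix_matrix_mult_def matrix_vector_mult_def vec_eq_iff)

text \<open>Conjugating \<open>x I - M\<close> by the orthogonal matrix with columns \<open>\<phi> j\<close> diagonalizes it.\<close>
lemma charpoly_orthonormal_eigenvectors:
  fixes M :: "real^'n^'n" and \<phi> :: "'n \<Rightarrow> real^'n" and \<mu> :: "'n \<Rightarrow> real"
  assumes on: "\<And>i j. \<phi> i \<bullet> \<phi> j = (if i = j then 1 else 0)"
    and ev: "\<And>i. M *v \<phi> i = \<mu> i *\<^sub>R \<phi> i"
  shows "charpoly M = (\<Prod>i\<in>UNIV. [:- \<mu> i, 1:])"
proof -
  define P where "P = (\<chi> i j. \<phi> j $ i)"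
  have colP: "column j P = \<phi> j" for j by (simp add: P_def column_def vec_eq_iff)
  have "transpose P ** P = mat 1"
    by (simp add: vec_eq_iff transpose_mult_dot_column colP on mat_def)
  then have detP: "det P * det P = 1" using det_mul[of "transpose P" P] by simp
  have "poly (charpoly M) x = poly (\<Prod>i\<in>UNIV. [:- \<mu> i, 1:]) x" for x
  proof -
    define N where "N = x *\<^sub>R (mat 1 :: real^'n^'n) - M"
    have charpoly_N: "poly (charpoly M) x = det N"
      unfolding charpoly_def poly_det N_def
      by (intro arg_cong[where f=det]) (simp add: vec_eq_iff mat_def)
    have NP: "N *v \<phi> j = (x - \<mu> j) *\<^sub>R \<phi> j" for j
      by (simp add: N_def matrix_vector_mult_diff_rdistrib ev scaleR_matrix_vector_assoc[symmetric]
          algebra_simps)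
    have diag: "(transpose P ** (N ** P)) $ i $ j = (if i = j then x - \<mu> j else 0)" for i j
      by (simp add: transpose_mult_dot_column column_matrix_mult colP NP on)
    have "det N = det P * det N * det P" using detP by (simp add: algebra_simps)
    also have "\<dots> = det (transpose P ** (N ** P))" by (simp add: det_mul)
    also have "\<dots> = (\<Prod>i\<in>UNIV. x - \<mu> i)" using det_diagonal[of "transpose P ** (N ** P)"] diag by simp
    finally show ?thesis using charpoly_N by (simp add: poly_prod)
  qed
  then have "poly (charpoly M) = poly (\<Prod>i\<in>UNIV. [:- \<mu> i, 1:])" by (rule ext)
  then show ?thesis by (simp only: poly_eq_poly_eq_iff)
qed

lemma size_sum_singletons: "finite A \<Longrightarrow> size (\<Sum>i\<in>A. {# f i #}) = card A"
  by (induction A rule: finite_induct) auto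

lemma set_mset_sum_singletons: "finite A \<Longrightarrow> set_mset (\<Sum>i\<in>A. {# f i #}) = f ` A"
  by (induction A rule: finite_induct) auto

lemma sorted_desc_second_smallest_le:
  fixes \<mu> :: "'n::finite \<Rightarrow> real"
  assumes c2: "CARD('n) \<ge> 2" and zero: "\<mu> i0 = 0" and nonneg: "\<And>i. \<mu> i \<ge> 0" and j: "j \<noteq> i0"
  shows "rev (sorted_list_of_multiset (\<Sum>i\<in>UNIV. {#\<mu> i#})) ! (CARD('n) - 2) \<le> \<mu> j"
proof -
  define R where "R = (\<Sum>i\<in>UNIV-{i0}. {#\<mu> i#})"
  define xs where "xs = sorted_list_of_multiset R"
  have split: "(\<Sum>i\<in>UNIV. {#\<mu> i#}) = add_mset 0 R"
    unfolding R_def using zero by (subst sum.remove[of UNIV i0]) auto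
  have set_xs: "set xs = \<mu> ` (UNIV - {i0})"
    unfolding xs_def R_def by (simp add: set_mset_sum_singletons)
  have "length xs = size R" by (metis mset_sorted_list_of_multiset size_mset xs_def)
  also have "\<dots> = CARD('n) - 1" unfolding R_def by (simp add: size_sum_singletons card_Diff_singleton)
  finally have len_xs: "length xs = CARD('n) - 1" .
  have "sorted_list_of_multiset (add_mset 0 R) = 0 # xs"
    unfolding xs_def sorted_list_of_multiset_insert
    using nonneg by (intro insort_is_Cons) (auto simp: R_def set_mset_sum_singletons)
  then have "rev (sorted_list_of_multiset (\<Sum>i\<in>UNIV. {#\<mu> i#})) ! (CARD('n) - 2) = xs ! 0"
    using split len_xs c2 by (simp add: nth_append rev_nth)
  also have "\<dots> \<le> \<mu> j"
  proof -
    obtain k where "k < length xs" "xs ! k = \<mu> j" using set_xs j by (force simp: in_set_conv_nth)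
    then show ?thesis using sorted_nth_mono[of xs 0 k] by (auto simp: xs_def)
  qed
  finally show ?thesis .
qed

lemma gram_matrix_inner:
  fixes T :: "real^'c^'d"
  shows "((transpose T ** T) *v x) \<bullet> y = (T *v x) \<bullet> (T *v y)"
  by (simp add: dot_lmul_matrix flip: matrix_vector_mul_assoc)

lemma gram_eigenvalue_le_rayleigh_on_sum_zero:
  fixes T :: "real^'c^'d" and q :: "real^'c"
  assumes c2: "CARD('c) \<ge> 2" and T1: "T *v (\<chi> i. 1) = 0" and q: "sum (\<lambda>i. q$i) UNIV = 0"
  shows "eigenvalues_desc (transpose T ** T) ! (CARD('c) - 2) * (norm q)^2 \<le> (norm (T *v q))^2"
proof -
  define M where "M = transpose T ** T"
  define u :: "real^'c" where "u = (\<chi> i. 1) /\<^sub>R sqrt (real CARD('c))"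
  have sa: "(M *v x) \<bullet> y = x \<bullet> (M *v y)" for x y
    unfolding M_def by (metis gram_matrix_inner inner_commute)
  have quad_form: "x \<bullet> (M *v x) = (norm (T *v x))^2" for x
    unfolding M_def by (metis gram_matrix_inner inner_commute power2_norm_eq_inner)
  have "u \<bullet> u = 1" by (simp add: u_def inner_vec_def flip: inverse_mult_distrib)
  then have u1: "norm u = 1" by (simp add: norm_eq_1)
  have Mu: "M *v u = 0 *\<^sub>R u"
    unfolding M_def u_def by (simp add: matrix_vector_mult_scaleR T1 flip: matrix_vector_mul_assoc)
  have uq: "u \<bullet> q = 0" using q by (simp add: u_def inner_vec_def flip: sum_distrib_left)
  obtain B where uB: "u \<in> B" and B: "orthonormal_eigenbasis ((*v) M) UNIV B"
    using self_adjoint_orthonormal_eigenbasis_containing[OF _ sa u1 Mu] by auto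
  obtain \<phi> where \<phi>: "bij_betw \<phi> (UNIV :: 'c set) B"
    and on: "\<And>i j. \<phi> i \<bullet> \<phi> j = (if i = j then 1 else 0)"
    and ev: "\<And>i. M *v \<phi> i = (\<phi> i \<bullet> (M *v \<phi> i)) *\<^sub>R \<phi> i"
    using orthonormal_eigenbasis_enumeration[OF B] by blast
  obtain i0 where i0: "\<phi> i0 = u" using \<phi> uB unfolding bij_betw_def by blast
  define \<mu> where "\<mu> i = \<phi> i \<bullet> (M *v \<phi> i)" for i
  have proots_M: "proots (charpoly M) = (\<Sum>i\<in>UNIV. {#\<mu> i#})"
    unfolding charpoly_orthonormal_eigenvectors[OF on ev[folded \<mu>_def]] by (subst proots_prod) auto
  have \<mu>_i0: "\<mu> i0 = 0" using i0 Mu by (simp add: \<mu>_def)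
  have \<mu>_nonneg: "\<mu> i \<ge> 0" for i by (simp add: \<mu>_def quad_form)
  have second: "eigenvalues_desc M ! (CARD('c) - 2) \<le> \<mu> j" if "j \<noteq> i0" for j
    unfolding eigenvalues_desc_def proots_M
    by (rule sorted_desc_second_smallest_le[of \<mu> i0, OF c2 \<mu>_i0 \<mu>_nonneg that])
  have "eigenvalues_desc M ! (CARD('c) - 2) \<le> b \<bullet> (M *v b)" if b: "b \<in> B" "b \<bullet> q \<noteq> 0" for b
  proof -
    obtain j where j: "\<phi> j = b" using \<phi> b(1) unfolding bij_betw_def by blast
    then have "j \<noteq> i0" using i0 uq b(2) by auto
    then show ?thesis using second j by (auto simp: \<mu>_def)
  qed
  then have "eigenvalues_desc M ! (CARD('c) - 2) * (q \<bullet> q) \<le> q \<bullet> (M *v q)"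
    by (intro rayleigh_lower_bound[OF _ B]) auto
  then show ?thesis unfolding quad_form by (simp add: M_def power2_norm_eq_inner)
qed

lemma centering_mult_vector:
  fixes x :: "real^'c"
  shows "centering *v x = x - ((\<Sum>j\<in>UNIV. x$j) / real CARD('c)) *\<^sub>R (\<chi> i. 1)"
proof -
  have "(\<Sum>j\<in>UNIV. (if i = j then 1 else 0) * x $ j) = x $ i" for i :: 'c
  proof -
    have "(\<Sum>j\<in>UNIV. (if i = j then 1 else 0) * x $ j) = (\<Sum>j\<in>UNIV. if i = j then x $ j else 0)"
      by (intro sum.cong) auto
    then show ?thesis by simp
  qed
  then show ?thesis unfolding centering_def
    by (simp add: matrix_vector_mult_diff_rdistrib vec_eq_iff matrix_vector_mult_def
        sum_divide_distrib mat_def left_diff_distrib sum_subtractf)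
qed

lemma centered_singular_value_lower_bound:
  fixes A :: "real^'c^'d" and q :: "real^'c"
  assumes c2: "CARD('c) \<ge> 2" and q: "sum (\<lambda>i. q$i) UNIV = 0"
    and \<sigma>: "0 \<le> \<sigma>" "\<sigma> \<le> singular_value (A ** centering) (CARD('c) - 1)"
  shows "\<sigma> * norm q \<le> norm (A *v q)"
proof -
  define T where "T = A ** centering"
  define l where "l = eigenvalues_desc (transpose T ** T) ! (CARD('c) - 2)"
  have T1: "T *v (\<chi> i. 1) = 0" and Tq: "T *v q = A *v q"
    by (simp_all add: T_def centering_mult_vector q flip: matrix_vector_mul_assoc)
  have "\<sigma> \<le> sqrt l"
    using \<sigma>(2) c2 by (simp add: singular_value_def T_def l_def numeral_2_eq_2 Suc_diff_Suc)
  then have "0 \<le> l" using \<sigma>(1) by (smt (verit) real_sqrt_lt_0_iff)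
  have "\<sigma>^2 \<le> l"
    using power_mono[OF \<open>\<sigma> \<le> sqrt l\<close> \<sigma>(1), of 2] \<open>0 \<le> l\<close> by simp
  then have "(\<sigma> * norm q)^2 \<le> l * (norm q)^2"
    by (simp add: power_mult_distrib mult_right_mono)
  also have "\<dots> \<le> (norm (A *v q))^2"
    unfolding l_def Tq[symmetric] by (rule gram_eigenvalue_le_rayleigh_on_sum_zero[OF c2 T1 q])
  finally have "(\<sigma> * norm q)^2 \<le> (norm (A *v q))^2" .
  then show ?thesis by (rule power2_le_imp_le) simp
qed

lemma spec_norm_nonneg: "spec_norm A \<ge> 0"
  unfolding spec_norm_def by (rule onorm_pos_le) simp

lemma norm_matrix_vector_le_spec_norm: "norm (A *v x) \<le> spec_norm A * norm x"
  unfolding spec_norm_def by (rule onorm) simp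

lemma norm_le_1_if_probability_vector:
  fixes p :: "real^'c"
  assumes nonneg: "\<forall>i. p $ i \<ge> 0" and sum1: "sum (\<lambda>i. p $ i) UNIV = 1"
  shows "norm p \<le> 1"
proof -
  have "p $ i \<le> 1" for i
    using member_le_sum[of i UNIV "\<lambda>i. p $ i"] nonneg sum1 by auto
  then have "p \<bullet> p \<le> (\<Sum>i\<in>UNIV. p$i)"
    unfolding inner_vec_def using nonneg by (intro sum_mono) (simp add: mult_left_le)
  then show ?thesis using sum1 by (simp add: norm_eq_sqrt_inner)
qed

theorem mainTheorem11:
  fixes EG Gamma :: "real^'c^'d"
    and U :: "real^'k^'d" and m :: "real^'d"
    and sigma_s :: real
    and g_h Eg_h :: "real^'d"
    and p_h p_hat :: "real^'c"
  assumes "CARD('c) \<ge> 2" and "CARD('d) \<ge> CARD('c)"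
    and "transpose U ** U = mat 1"
    and "singular_value (EG ** centering) (CARD('c) - 1) \<ge> sigma_s"
    and "spec_norm (aff_proj_mat U m Gamma - EG) < sigma_s"
    and "\<forall>i. p_h $ i \<ge> 0" and "sum (\<lambda>i. p_h $ i) UNIV = 1"
    and "EG *v p_h = Eg_h"
    and "aff_proj_mat U m Gamma *v p_hat = aff_proj U m g_h"
    and "sum (\<lambda>i. p_hat $ i) UNIV = 1"
  shows "norm (p_hat - p_h) \<le>
    (norm (aff_proj U m g_h - Eg_h) + sqrt 2 * spec_norm (aff_proj_mat U m Gamma - EG))
      / (sigma_s - spec_norm (aff_proj_mat U m Gamma - EG))"
proof -
  define D where "D = aff_proj_mat U m Gamma - EG"
  define q where "q = p_hat - p_h"
  define dg where "dg = aff_proj U m g_h - Eg_h"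
  have N: "0 \<le> spec_norm D" "spec_norm D < sigma_s" "0 \<le> sigma_s"
    using spec_norm_nonneg[of D] assms(5) by (auto simp: D_def)
  have "sum (\<lambda>i. q $ i) UNIV = 0" using assms(7,10) by (simp add: q_def sum_subtractf)
  then have "sigma_s * norm q \<le> norm (EG *v q)"
    by (rule centered_singular_value_lower_bound[OF assms(1) _ N(3) assms(4)])
  also have "EG *v q = dg - D *v p_hat"
    using assms(8,9) by (simp add: q_def dg_def D_def matrix_vector_mult_diff_distrib
        matrix_vector_mult_diff_rdistrib)
  also have "norm \<dots> \<le> norm dg + spec_norm D * norm p_hat"
    using norm_triangle_ineq4[of dg "D *v p_hat"] norm_matrix_vector_le_spec_norm[of D p_hat]
    by linarith
  also have "\<dots> \<le> norm dg + spec_norm D * (1 + norm q)"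
    using norm_triangle_ineq[of p_h q] norm_le_1_if_probability_vector[OF assms(6,7)] N(1)
    by (intro add_left_mono mult_left_mono) (auto simp: q_def)
  finally have "(sigma_s - spec_norm D) * norm q \<le> norm dg + spec_norm D"
    by (simp add: algebra_simps)
  also have "\<dots> \<le> norm dg + sqrt 2 * spec_norm D"
    using N(1) by (simp add: mult_le_cancel_right1)
  finally show ?thesis using N by (simp add: pos_le_divide_eq mult.commute D_def q_def dg_def)
qed

end
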